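(* Let $\gamma>1$, $\alpha>\frac12$, $\theta\in(0,\frac12)$, $\epsilon>0$ and $\bar\rho>0$. Let $(\rho,u)$ be a smooth solution with $\rho>0$ of the regularized system $\rho_t+(\rho u)_x=0$, $(\rho u)_t+(\rho u^2+\rho^\gamma)_x=((\rho^\alpha+\epsilon\rho^\theta)u_x)_x$ on $\mathbb R\times[0,T]$ satisfying the estimate of Lemma 3.3. Then there exist a constant $C$ independent of $\epsilon$ and $T$, and a constant $C(\epsilon,T)>0$, such that $$0<C(\epsilon,T)\le\rho(x,t)\le C\quad\text{on }\mathbb R\times[0,T].$$
   Context: $\Psi(\rho,\bar\rho)=\int_{\bar\rho}^{\rho}\frac{s^\gamma-\bar\rho^\gamma}{s^2}ds$. The estimate of Lemma 3.3: $\sup_t\int\{\rho u^2+[(\rho^{\alpha-1/2}/(\alpha-1/2))_x]^2+\epsilon^2[(\rho^{\theta-1/2}/(\theta-1/2))_x]^2+\rho\Psi(\rho,\bar\rho)\}dx+\int_0^T\int\{(\rho^\alpha+\epsilon\rho^\theta)u_x^2+[(\rho^{(\alpha+\gamma-1)/2}-\bar\rho^{(\alpha+\gamma-1)/2})_x]^2+\epsilon[(\rho^{(\theta+\gamma-1)/2}-\bar\rho^{(\theta+\gamma-1)/2})_x]^2\}dxdt\le C$ with $C$ independent of $\epsilon,T$. *)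

theory Defs
  imports "HOL-Analysis.Analysis"
begin

text \<open>C^k regularity of a real function of (x,t) on a set S, via partial derivatives
  (derivatives taken within S, so regularity up to the boundary t = 0, t = T).\<close>
fun Ck_on :: "nat \<Rightarrow> (real \<times> real) set \<Rightarrow> (real \<times> real \<Rightarrow> real) \<Rightarrow> bool" where
  "Ck_on 0 S f = continuous_on S f"
| "Ck_on (Suc k) S f =
     (\<exists>fx ft. (\<forall>z\<in>S. (f has_derivative (\<lambda>h. fx z * fst h + ft z * snd h)) (at z within S))
              \<and> Ck_on k S fx \<and> Ck_on k S ft)"

definition smooth_on :: "(real \<times> real) set \<Rightarrow> (real \<Rightarrow> real \<Rightarrow> real) \<Rightarrow> bool" where
  "smooth_on S f \<longleftrightarrow> (\<forall>k. Ck_on k S (\<lambda>(x, t). f x t))"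

definition dx :: "(real \<Rightarrow> real \<Rightarrow> real) \<Rightarrow> real \<Rightarrow> real \<Rightarrow> real" where
  "dx f x t = deriv (\<lambda>y. f y t) x"

definition dt :: "(real \<Rightarrow> real \<Rightarrow> real) \<Rightarrow> real \<Rightarrow> real \<Rightarrow> real" where
  "dt f x t = deriv (\<lambda>s. f x s) t"

definition Psi :: "real \<Rightarrow> real \<Rightarrow> real \<Rightarrow> real" where
  "Psi \<gamma> r rb =
     (if rb \<le> r then integral {rb..r} (\<lambda>s. (s powr \<gamma> - rb powr \<gamma>) / s\<^sup>2)
      else - integral {r..rb} (\<lambda>s. (s powr \<gamma> - rb powr \<gamma>) / s\<^sup>2))"

definition solves_system ::
  "real \<Rightarrow> real \<Rightarrow> real \<Rightarrow> real \<Rightarrow> real \<Rightarrow> (real \<Rightarrow> real \<Rightarrow> real) \<Rightarrow> (real \<Rightarrow> real \<Rightarrow> real) \<Rightarrow> bool" where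
  "solves_system \<gamma> \<alpha> \<theta> \<epsilon> T \<rho> u \<longleftrightarrow>
     (\<forall>x t. 0 < t \<and> t < T \<longrightarrow>
        dt \<rho> x t + dx (\<lambda>x t. \<rho> x t * u x t) x t = 0
      \<and> dt (\<lambda>x t. \<rho> x t * u x t) x t
          + dx (\<lambda>x t. \<rho> x t * (u x t)\<^sup>2 + \<rho> x t powr \<gamma>) x t
        = dx (\<lambda>x t. (\<rho> x t powr \<alpha> + \<epsilon> * \<rho> x t powr \<theta>) * dx u x t) x t)"

definition lemma33_estimate ::
  "real \<Rightarrow> real \<Rightarrow> real \<Rightarrow> real \<Rightarrow> real \<Rightarrow> real \<Rightarrow> real \<Rightarrow> (real \<Rightarrow> real \<Rightarrow> real) \<Rightarrow> (real \<Rightarrow> real \<Rightarrow> real) \<Rightarrow> bool" where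
  "lemma33_estimate \<gamma> \<alpha> \<theta> \<rho>b C0 \<epsilon> T \<rho> u \<longleftrightarrow>
     (\<forall>t\<in>{0..T}.
        (\<integral>\<^sup>+ x. ennreal (\<rho> x t * (u x t)\<^sup>2
            + (dx (\<lambda>x t. \<rho> x t powr (\<alpha> - 1/2) / (\<alpha> - 1/2)) x t)\<^sup>2
            + \<epsilon>\<^sup>2 * (dx (\<lambda>x t. \<rho> x t powr (\<theta> - 1/2) / (\<theta> - 1/2)) x t)\<^sup>2
            + \<rho> x t * Psi \<gamma> (\<rho> x t) \<rho>b) \<partial>lborel) \<le> ennreal C0)
   \<and> (\<integral>\<^sup>+ t. indicator {0..T} t *
        (\<integral>\<^sup>+ x. ennreal ((\<rho> x t powr \<alpha> + \<epsilon> * \<rho> x t powr \<theta>) * (dx u x t)\<^sup>2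
            + (dx (\<lambda>x t. \<rho> x t powr ((\<alpha> + \<gamma> - 1)/2) - \<rho>b powr ((\<alpha> + \<gamma> - 1)/2)) x t)\<^sup>2
            + \<epsilon> * (dx (\<lambda>x t. \<rho> x t powr ((\<theta> + \<gamma> - 1)/2) - \<rho>b powr ((\<theta> + \<gamma> - 1)/2)) x t)\<^sup>2)
          \<partial>lborel) \<partial>lborel) \<le> ennreal C0"

end

theory Submission
  imports Defs
begin

text \<open>
  Fix a time t and write r = rho(., t).  The energy estimate of Lemma 3.3
  controls, uniformly in t, the L2-norm of the derivative of r^(alpha-1/2)/(alpha-1/2)
  and of eps*r^(theta-1/2)/(theta-1/2), together with the integral of the potential
  r*Psi(r, rhobar), which is bounded below by a positive constant wherever r is large
  (r >= 3 rhobar) or small (r <= rhobar/4).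

  The core is a one-dimensional level-set bound: if int (f')^2 <= A and int h <= A,
  and h >= m > 0 wherever f > c, then to the right of any point x0 there is, within
  distance A/m + 1, a point where f <= c; integrating f' between the two points and
  using -f' <= (f'^2 + 1)/2 gives f(x0) <= c + (A + A/m + 1)/2.  Applied to
  f = r^(alpha-1/2)/(alpha-1/2) this bounds r from above by a constant independent of
  eps and T; applied to f = eps r^(theta-1/2)/(1/2-theta) it bounds r from below by a
  positive constant depending on eps.
\<close>

definition level_excess :: "real \<Rightarrow> real \<Rightarrow> real" where
  "level_excess A m = (A + A/m + 1) / 2"

lemma point_below_threshold:
  fixes f h :: "real \<Rightarrow> real"
  assumes int_h: "(\<integral>\<^sup>+x. ennreal (h x) \<partial>lborel) \<le> ennreal A"
    and A: "A \<ge> 0" and m: "m > 0" and L: "L \<ge> 0" and mL: "m * L > A"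
    and thr: "\<And>y. f y > c \<Longrightarrow> m \<le> h y"
  shows "\<exists>y\<in>{x0..x0+L}. f y \<le> c"
proof (rule ccontr)
  assume "\<not> ?thesis"
  then have above: "\<And>y. y \<in> {x0..x0+L} \<Longrightarrow> m \<le> h y" using thr by force
  have "ennreal (m * L) = (\<integral>\<^sup>+x. ennreal m * indicator {x0..x0+L} x \<partial>lborel)"
    using m L by (simp add: nn_integral_cmult_indicator ennreal_mult)
  also have "\<dots> \<le> (\<integral>\<^sup>+x. ennreal (h x) \<partial>lborel)"
    by (rule nn_integral_mono) (auto simp: indicator_def above ennreal_leI)
  also have "\<dots> \<le> ennreal A" by (rule int_h)
  finally have "m * L \<le> A" using A by (simp add: ennreal_le_iff)
  with mL show False by simp
qed

text \<open>A C1 function cannot decrease by more than (int f'^2 + length)/2 across an interval,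
  since -f' <= (f'^2 + 1)/2.\<close>
lemma decrease_bound:
  fixes f f' :: "real \<Rightarrow> real"
  assumes der: "\<And>x. (f has_real_derivative f' x) (at x)" and cont: "continuous_on UNIV f'"
    and int_f': "(\<integral>\<^sup>+x. ennreal ((f' x)\<^sup>2) \<partial>lborel) \<le> ennreal A"
    and A: "A \<ge> 0" and xy: "x \<le> y"
  shows "f x - f y \<le> (A + (y - x)) / 2"
proof -
  have ftc: "(f' has_integral (f y - f x)) {x..y}"
    by (rule fundamental_theorem_of_calculus[OF xy])
      (use der in \<open>simp add: has_real_derivative_iff_has_vector_derivative[symmetric]
        has_field_derivative_at_within\<close>)
  have int_sq: "(\<lambda>s. (f' s)\<^sup>2) integrable_on {x..y}"
    by (intro integrable_continuous_interval continuous_intros continuous_on_subset[OF cont]) auto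
  have "ennreal (integral {x..y} (\<lambda>s. (f' s)\<^sup>2)) = (\<integral>\<^sup>+s. indicator {x..y} s * (f' s)\<^sup>2 \<partial>lborel)"
    by (rule nn_integral_has_integral_lebesgue[symmetric]) (use int_sq in auto)
  also have "\<dots> \<le> (\<integral>\<^sup>+s. ennreal ((f' s)\<^sup>2) \<partial>lborel)"
    by (rule nn_integral_mono) (auto simp: indicator_def)
  also have "\<dots> \<le> ennreal A" by (rule int_f')
  finally have sq_le: "integral {x..y} (\<lambda>s. (f' s)\<^sup>2) \<le> A" using A by (simp add: ennreal_le_iff)
  have "f x - f y = integral {x..y} (\<lambda>s. - f' s)"
    using ftc by (simp add: integral_neg integral_unique has_integral_integrable)
  also have "\<dots> \<le> integral {x..y} (\<lambda>s. ((f' s)\<^sup>2 + 1) / 2)"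
  proof (rule integral_le)
    show "(\<lambda>s. - f' s) integrable_on {x..y}" using ftc integrable_neg by blast
    show "(\<lambda>s. ((f' s)\<^sup>2 + 1) / 2) integrable_on {x..y}"
      by (intro integrable_continuous_interval continuous_intros continuous_on_subset[OF cont]) auto
    fix s have "0 \<le> (f' s + 1)\<^sup>2" by simp
    then show "- f' s \<le> ((f' s)\<^sup>2 + 1) / 2" by (simp add: power2_eq_square algebra_simps)
  qed
  also have "\<dots> = (integral {x..y} (\<lambda>s. (f' s)\<^sup>2) + (y - x)) / 2"
    using integral_add[OF int_sq integrable_const_ivl[of 1 x y]] xy by (simp add: integral_divide)
  also have "\<dots> \<le> (A + (y - x)) / 2" using sq_le by simp
  finally show ?thesis .
qed

lemma level_set_bound:
  fixes f f' h :: "real \<Rightarrow> real"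
  assumes der: "\<And>x. (f has_real_derivative f' x) (at x)" and cont: "continuous_on UNIV f'"
    and int_f': "(\<integral>\<^sup>+x. ennreal ((f' x)\<^sup>2) \<partial>lborel) \<le> ennreal A"
    and int_h: "(\<integral>\<^sup>+x. ennreal (h x) \<partial>lborel) \<le> ennreal A"
    and A: "A \<ge> 0" and m: "m > 0" and thr: "\<And>y. f y > c \<Longrightarrow> m \<le> h y"
  shows "f x \<le> c + level_excess A m"
proof -
  define L where "L = A/m + 1"
  have L: "L \<ge> 0" and mL: "m * L = A + m" using A m by (auto simp: L_def field_simps)
  obtain y where y: "x \<le> y" "y \<le> x + L" "f y \<le> c"
    using point_below_threshold[OF int_h A m L, of c f x] mL m thr by auto
  have "f x - f y \<le> (A + (y - x)) / 2" by (rule decrease_bound[OF der cont int_f' A y(1)])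
  moreover have "y - x \<le> A/m + 1" using y(2) by (simp add: L_def)
  ultimately show ?thesis using y(3) unfolding level_excess_def by (simp add: field_simps)
qed

lemma Psi_integrand_continuous:
  "0 < r \<Longrightarrow> continuous_on {r..R} (\<lambda>s::real. (s powr \<gamma> - rb powr \<gamma>) / s\<^sup>2)"
  by (intro continuous_intros) auto

text \<open>Psi(r, rb) >= 0: the integrand has the sign of s - rb, and the integral is oriented
  from rb to r.\<close>
lemma Psi_nonneg:
  assumes "r > 0" "rb > 0" "\<gamma> \<ge> 0"
  shows "Psi \<gamma> r rb \<ge> 0"
proof (cases "rb \<le> r")
  case True
  have "0 \<le> integral {rb..r} (\<lambda>s. (s powr \<gamma> - rb powr \<gamma>) / s\<^sup>2)"
    by (rule integral_nonneg)
      (use assms True in \<open>auto intro!: integrable_continuous_interval Psi_integrand_continuous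
        divide_nonneg_pos powr_mono2\<close>)
  then show ?thesis using True by (simp add: Psi_def)
next
  case False
  have int: "(\<lambda>s. (s powr \<gamma> - rb powr \<gamma>) / s\<^sup>2) integrable_on {r..rb}"
    by (rule integrable_continuous_interval[OF Psi_integrand_continuous]) (use assms in simp)
  have "0 \<le> integral {r..rb} (\<lambda>s. - ((s powr \<gamma> - rb powr \<gamma>) / s\<^sup>2))"
    by (rule integral_nonneg[OF integrable_neg[OF int]])
      (use assms False in \<open>auto intro!: divide_nonpos_pos powr_mono2\<close>)
  then show ?thesis using False int by (simp add: Psi_def integral_neg)
qed

text \<open>For large densities (r >= 3 rb) the potential density r*Psi(r, rb) is bounded below
  by a positive constant: the integrand is at least ((2rb)^gamma - rb^gamma)/(9 rb^2)
  on [2rb, 3rb].\<close>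
lemma rPsi_lower_large:
  assumes rb: "rb > 0" and \<gamma>: "\<gamma> > 0" and r: "r \<ge> 3 * rb"
  shows "r * Psi \<gamma> r rb \<ge> ((2*rb) powr \<gamma> - rb powr \<gamma>) / 3"
proof -
  let ?g = "\<lambda>s. (s powr \<gamma> - rb powr \<gamma>) / s\<^sup>2"
  define k where "k = ((2*rb) powr \<gamma> - rb powr \<gamma>) / (9 * rb\<^sup>2)"
  have gap: "0 \<le> (2*rb) powr \<gamma> - rb powr \<gamma>" using assms by (auto intro!: powr_mono2)
  then have k0: "k \<ge> 0" unfolding k_def by simp
  have int: "?g integrable_on {rb..r}" and int_sub: "?g integrable_on {2*rb..3*rb}"
    by (rule integrable_continuous_interval[OF Psi_integrand_continuous], use assms in simp)+
  have "rb * k = integral {2*rb..3*rb} (\<lambda>s. k)" using rb by simp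
  also have "\<dots> \<le> integral {2*rb..3*rb} ?g"
  proof (rule integral_le[OF integrable_const_ivl int_sub])
    fix s assume s: "s \<in> {2*rb..3*rb}"
    have "(2*rb) powr \<gamma> - rb powr \<gamma> \<le> s powr \<gamma> - rb powr \<gamma>" using assms s by (auto intro!: powr_mono2)
    moreover have "s\<^sup>2 \<le> 9 * rb\<^sup>2"
      using power_mono[of s "3*rb" 2] s rb by (simp add: power_mult_distrib)
    moreover have "s\<^sup>2 > 0" using s rb by auto
    ultimately show "k \<le> ?g s" using gap unfolding k_def by (intro frac_le) auto
  qed
  also have "\<dots> \<le> integral {rb..r} ?g"
    by (rule integral_subset_le[OF _ int_sub int])
      (use assms in \<open>auto intro!: divide_nonneg_pos powr_mono2\<close>)
  also have "\<dots> = Psi \<gamma> r rb" using assms by (simp add: Psi_def)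
  finally have "rb * k \<le> Psi \<gamma> r rb" .
  then have "3 * rb * (rb * k) \<le> r * Psi \<gamma> r rb"
    using r rb k0 by (intro mult_mono) auto
  then show ?thesis using rb by (simp add: k_def power2_eq_square)
qed

text \<open>For small densities (r <= rb/4) the potential density is again bounded below:
  -Psi(r, rb) >= k (1/r - 2/rb) with k = rb^gamma - (rb/2)^gamma, from the integral of
  k/s^2 over [r, rb/2].\<close>
lemma rPsi_lower_small:
  assumes rb: "rb > 0" and \<gamma>: "\<gamma> > 0" and r: "0 < r" "r \<le> rb / 4"
  shows "r * Psi \<gamma> r rb \<ge> (rb powr \<gamma> - (rb/2) powr \<gamma>) / 2"
proof -
  let ?g = "\<lambda>s. - ((s powr \<gamma> - rb powr \<gamma>) / s\<^sup>2)"
  define k where "k = rb powr \<gamma> - (rb/2) powr \<gamma>"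
  have k0: "k \<ge> 0" unfolding k_def using assms by (auto intro!: powr_mono2)
  have int: "?g integrable_on {r..rb}" and int_sub: "?g integrable_on {r..rb/2}"
    by (rule integrable_neg, rule integrable_continuous_interval[OF Psi_integrand_continuous],
        use assms in simp)+
  have prim: "((\<lambda>s. k / s\<^sup>2) has_integral (k * (1/r - 2/rb))) {r..rb/2}"
  proof -
    have "((\<lambda>s. k / s\<^sup>2) has_integral ((- k / (rb/2)) - (- k / r))) {r..rb/2}"
    proof (rule fundamental_theorem_of_calculus)
      show "r \<le> rb/2" using assms by simp
      fix s assume "s \<in> {r..rb/2}"
      then have "s > 0" using assms by auto
      then have "((\<lambda>s. - k / s) has_real_derivative k / s\<^sup>2) (at s within {r..rb/2})"
        by (auto intro!: derivative_eq_intros simp: power2_eq_square field_simps)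
      then show "((\<lambda>s. - k / s) has_vector_derivative k / s\<^sup>2) (at s within {r..rb/2})"
        by (simp add: has_real_derivative_iff_has_vector_derivative)
    qed
    then show ?thesis by (simp add: field_simps)
  qed
  have "k * (1/r - 2/rb) \<le> integral {r..rb/2} ?g"
  proof (rule has_integral_le[OF prim integrable_integral[OF int_sub]])
    fix s assume s: "s \<in> {r..rb/2}"
    then have s0: "s > 0" using assms by auto
    have "s powr \<gamma> \<le> (rb/2) powr \<gamma>" using s s0 assms by (auto intro!: powr_mono2)
    then have "k \<le> rb powr \<gamma> - s powr \<gamma>" unfolding k_def by simp
    then have "k / s\<^sup>2 \<le> (rb powr \<gamma> - s powr \<gamma>) / s\<^sup>2" using s0 by (simp add: divide_right_mono)
    then show "k / s\<^sup>2 \<le> ?g s" by (simp add: minus_divide_left)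
  qed
  also have "\<dots> \<le> integral {r..rb} ?g"
    by (rule integral_subset_le[OF _ int_sub int])
      (use assms in \<open>auto intro!: divide_nonpos_pos powr_mono2\<close>)
  also have "\<dots> = Psi \<gamma> r rb"
    using assms integrable_neg[OF int] by (simp add: Psi_def integral_neg)
  finally have P: "k * (1/r - 2/rb) \<le> Psi \<gamma> r rb" .
  have "k / 2 \<le> k * (1 - 2*r/rb)"
    using mult_left_mono[OF _ k0, of "1/2" "1 - 2*r/rb"] assms by (simp add: field_simps)
  also have "\<dots> = r * (k * (1/r - 2/rb))" using assms by (simp add: field_simps)
  also have "\<dots> \<le> r * Psi \<gamma> r rb" using P assms by (simp add: mult_left_mono)
  finally show ?thesis unfolding k_def .
qed

lemma smooth_slice_C1:
  assumes sm: "smooth_on (UNIV \<times> {0..T}) \<rho>" and t: "t \<in> {0..T}"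
  shows "\<exists>r'. (\<forall>y. ((\<lambda>y. \<rho> y t) has_real_derivative r' y) (at y)) \<and> continuous_on UNIV r'"
proof -
  let ?S = "UNIV \<times> {0..T} :: (real \<times> real) set"
  have "Ck_on (Suc 0) ?S (\<lambda>(x, t). \<rho> x t)" using sm unfolding smooth_on_def by blast
  then obtain fx ft
    where d: "\<And>z. z \<in> ?S \<Longrightarrow> ((\<lambda>(x, t). \<rho> x t) has_derivative
                (\<lambda>h. fx z * fst h + ft z * snd h)) (at z within ?S)"
      and c: "continuous_on ?S fx" by auto
  have "((\<lambda>y. \<rho> y t) has_real_derivative fx (y, t)) (at y)" for y
  proof -
    have slice: "((\<lambda>y::real. (y, t)) has_derivative (\<lambda>h. (h, 0))) (at y within UNIV)"
      by (auto intro!: derivative_eq_intros)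
    have "((\<lambda>y. (\<lambda>(x, t). \<rho> x t) (y, t)) has_derivative
        (\<lambda>h. fx (y, t) * fst (h, 0::real) + ft (y, t) * snd (h, 0::real))) (at y within UNIV)"
      by (rule has_derivative_in_compose2[OF d _ _ slice]) (use t in auto)
    then have "((\<lambda>y. \<rho> y t) has_derivative (\<lambda>h. fx (y, t) * h)) (at y)"
      by simp
    then show ?thesis by (simp add: has_field_derivative_def)
  qed
  moreover have "continuous_on UNIV (\<lambda>y. fx (y, t))"
    by (rule continuous_on_compose2[OF c]) (use t in \<open>auto intro!: continuous_intros\<close>)
  ultimately show ?thesis by (intro exI[of _ "\<lambda>y. fx (y, t)"]) auto
qed

lemma powr_quotient_derivative:
  fixes r r' :: "real \<Rightarrow> real"
  assumes pos: "\<And>y. r y > 0" and d: "\<And>y. (r has_real_derivative r' y) (at y)"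
    and c: "continuous_on UNIV r'" and p: "p \<noteq> 0"
  shows "((\<lambda>y. r y powr p / p) has_real_derivative r y powr (p - 1) * r' y) (at y)"
    and "continuous_on UNIV (\<lambda>y. r y powr (p - 1) * r' y)"
proof -
  show "((\<lambda>y. r y powr p / p) has_real_derivative r y powr (p - 1) * r' y) (at y)"
    using DERIV_cdivide[OF DERIV_fun_powr[OF d pos, of p], of p] p by simp
  have "continuous_on UNIV r"
    using d by (meson DERIV_isCont continuous_at_imp_continuous_on)
  then show "continuous_on UNIV (\<lambda>y. r y powr (p - 1) * r' y)"
    using pos c by (auto intro!: continuous_intros simp: less_imp_neq[symmetric])
qed

text \<open>The upper bound for the density obtained from the level-set bound with
  f = r^a/a, threshold (3 rb)^a/a and m the lower bound of r*Psi for r >= 3 rb.\<close>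
definition upper_bound :: "real \<Rightarrow> real \<Rightarrow> real \<Rightarrow> real \<Rightarrow> real" where
  "upper_bound \<gamma> a \<rho>b A =
     ((3*\<rho>b) powr a + a * level_excess A (((2*\<rho>b) powr \<gamma> - \<rho>b powr \<gamma>) / 3)) powr (1/a)"

text \<open>The lower bound obtained with f = eps r^p/(-p) (p < 0), threshold eps (rb/4)^p/(-p)
  and m the lower bound of r*Psi for r <= rb/4.\<close>
definition lower_bound :: "real \<Rightarrow> real \<Rightarrow> real \<Rightarrow> real \<Rightarrow> real \<Rightarrow> real" where
  "lower_bound \<gamma> p \<rho>b A \<epsilon> =
     ((\<rho>b/4) powr p - p * level_excess A ((\<rho>b powr \<gamma> - (\<rho>b/2) powr \<gamma>) / 2) / \<epsilon>) powr (1/p)"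

lemma level_excess_pos:
  assumes "A \<ge> 0" "m > 0"
  shows "level_excess A m > 0"
proof -
  have "A / m \<ge> 0" using assms by simp
  then show ?thesis using assms(1) unfolding level_excess_def by argo
qed

text \<open>The lower bound is positive: its base exceeds (rb/4)^p > 0, since p < 0.\<close>
lemma lower_bound_pos:
  assumes "\<gamma> > 0" "p < 0" "\<rho>b > 0" "\<epsilon> > 0" "A \<ge> 0"
  shows "lower_bound \<gamma> p \<rho>b A \<epsilon> > 0"
proof -
  have "(\<rho>b/2) powr \<gamma> < \<rho>b powr \<gamma>" using assms by (intro powr_less_mono2) auto
  then have "level_excess A ((\<rho>b powr \<gamma> - (\<rho>b/2) powr \<gamma>) / 2) > 0"
    using assms by (intro level_excess_pos) auto
  then have "p * level_excess A ((\<rho>b powr \<gamma> - (\<rho>b/2) powr \<gamma>) / 2) / \<epsilon> < 0"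
    using assms by (intro divide_neg_pos mult_neg_pos) auto
  moreover have "(\<rho>b/4) powr p > 0" using assms by simp
  ultimately have "(\<rho>b/4) powr p - p * level_excess A ((\<rho>b powr \<gamma> - (\<rho>b/2) powr \<gamma>) / 2) / \<epsilon> > 0"
    by linarith
  then show ?thesis unfolding lower_bound_def by simp
qed

text \<open>Upper bound on one time slice: only the gradient term of r^a/a and the potential
  term of the energy are used, so the bound does not depend on eps.\<close>
lemma slice_upper_bound:
  fixes r r' :: "real \<Rightarrow> real"
  assumes \<gamma>: "\<gamma> > 1" and a: "a > 0" and \<rho>b: "\<rho>b > 0" and A: "A \<ge> 0"
    and pos: "\<And>y. r y > 0" and d: "\<And>y. (r has_real_derivative r' y) (at y)"
    and c: "continuous_on UNIV r'"
    and grad: "(\<integral>\<^sup>+y. ennreal ((deriv (\<lambda>y. r y powr a / a) y)\<^sup>2) \<partial>lborel) \<le> ennreal A"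
    and pot: "(\<integral>\<^sup>+y. ennreal (r y * Psi \<gamma> (r y) \<rho>b) \<partial>lborel) \<le> ennreal A"
  shows "r x \<le> upper_bound \<gamma> a \<rho>b A"
proof -
  define m where "m = ((2*\<rho>b) powr \<gamma> - \<rho>b powr \<gamma>) / 3"
  have m: "m > 0" using powr_less_mono2[of \<gamma> \<rho>b "2*\<rho>b"] \<gamma> \<rho>b by (simp add: m_def)
  have "a \<noteq> 0" using a by simp
  note der = powr_quotient_derivative[OF pos d c this]
  have "deriv (\<lambda>y. r y powr a / a) = (\<lambda>y. r y powr (a - 1) * r' y)"
    using DERIV_imp_deriv[OF der(1)] by auto
  with grad have grad': "(\<integral>\<^sup>+y. ennreal ((r y powr (a - 1) * r' y)\<^sup>2) \<partial>lborel) \<le> ennreal A"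
    by simp
  have large: "m \<le> r y * Psi \<gamma> (r y) \<rho>b" if "r y powr a / a > (3*\<rho>b) powr a / a" for y
  proof -
    have "3*\<rho>b \<le> r y"
    proof (rule ccontr)
      assume "\<not> 3*\<rho>b \<le> r y"
      then have "r y powr a \<le> (3*\<rho>b) powr a" using pos[of y] a by (intro powr_mono2) auto
      then show False using that a by (simp add: divide_right_mono leD)
    qed
    then show ?thesis using rPsi_lower_large[of \<rho>b \<gamma> "r y"] \<rho>b \<gamma> by (simp add: m_def)
  qed
  have "r x powr a / a \<le> (3*\<rho>b) powr a / a + level_excess A m"
    by (rule level_set_bound[OF der grad' pot A m large])
  then have "r x powr a \<le> (3*\<rho>b) powr a + a * level_excess A m"
    using a by (simp add: field_simps)
  then have "(r x powr a) powr (1/a) \<le> ((3*\<rho>b) powr a + a * level_excess A m) powr (1/a)"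
    using pos a by (intro powr_mono2) auto
  then show ?thesis using pos[of x] a by (simp add: upper_bound_def m_def powr_powr)
qed

text \<open>Lower bound on one time slice, from the gradient term of eps r^p/p with p < 0 and
  the potential term; here the bound degenerates as eps tends to 0.\<close>
lemma slice_lower_bound:
  fixes r r' :: "real \<Rightarrow> real"
  assumes \<gamma>: "\<gamma> > 1" and p: "p < 0" and \<rho>b: "\<rho>b > 0" and \<epsilon>: "\<epsilon> > 0" and A: "A \<ge> 0"
    and pos: "\<And>y. r y > 0" and d: "\<And>y. (r has_real_derivative r' y) (at y)"
    and c: "continuous_on UNIV r'"
    and grad: "(\<integral>\<^sup>+y. ennreal (\<epsilon>\<^sup>2 * (deriv (\<lambda>y. r y powr p / p) y)\<^sup>2) \<partial>lborel) \<le> ennreal A"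
    and pot: "(\<integral>\<^sup>+y. ennreal (r y * Psi \<gamma> (r y) \<rho>b) \<partial>lborel) \<le> ennreal A"
  shows "lower_bound \<gamma> p \<rho>b A \<epsilon> \<le> r x"
proof -
  define m where "m = (\<rho>b powr \<gamma> - (\<rho>b/2) powr \<gamma>) / 2"
  have m: "m > 0" using powr_less_mono2[of \<gamma> "\<rho>b/2" \<rho>b] \<gamma> \<rho>b by (simp add: m_def)
  define f where "f y = \<epsilon> * r y powr p / (- p)" for y
  have "p \<noteq> 0" using p by simp
  note der = powr_quotient_derivative[OF pos d c this]
  have f_eq: "f = (\<lambda>y. - (\<epsilon> * (r y powr p / p)))"
    by (simp add: f_def fun_eq_iff)
  have f_der: "(f has_real_derivative - (\<epsilon> * (r y powr (p - 1) * r' y))) (at y)" for y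
    unfolding f_eq by (intro DERIV_minus DERIV_cmult der(1))
  have f'_cont: "continuous_on UNIV (\<lambda>y. - (\<epsilon> * (r y powr (p - 1) * r' y)))"
    by (intro continuous_intros der(2))
  have "deriv (\<lambda>y. r y powr p / p) = (\<lambda>y. r y powr (p - 1) * r' y)"
    using DERIV_imp_deriv[OF der(1)] by auto
  with grad have grad':
    "(\<integral>\<^sup>+y. ennreal ((- (\<epsilon> * (r y powr (p - 1) * r' y)))\<^sup>2) \<partial>lborel) \<le> ennreal A"
    by (simp add: power_mult_distrib)
  have small: "m \<le> r y * Psi \<gamma> (r y) \<rho>b" if "f y > \<epsilon> * (\<rho>b/4) powr p / (- p)" for y
  proof -
    have "r y \<le> \<rho>b/4"
    proof (rule ccontr)
      assume "\<not> r y \<le> \<rho>b/4"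
      then have "r y powr p \<le> (\<rho>b/4) powr p" using \<rho>b p by (intro powr_mono2') auto
      then have "f y \<le> \<epsilon> * (\<rho>b/4) powr p / (- p)"
        unfolding f_def using p \<epsilon> by (intro divide_right_mono mult_left_mono) auto
      then show False using that by simp
    qed
    then show ?thesis using rPsi_lower_small[of \<rho>b \<gamma> "r y"] \<rho>b \<gamma> pos by (simp add: m_def)
  qed
  have "f x \<le> \<epsilon> * (\<rho>b/4) powr p / (- p) + level_excess A m"
    by (rule level_set_bound[OF f_der f'_cont grad' pot A m small])
  then have "r x powr p \<le> (\<rho>b/4) powr p - p * level_excess A m / \<epsilon>"
    using p \<epsilon> by (simp add: f_def field_simps)
  then have "((\<rho>b/4) powr p - p * level_excess A m / \<epsilon>) powr (1/p) \<le> (r x powr p) powr (1/p)"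
    using pos[of x] p by (intro powr_mono2') auto
  then show ?thesis using pos[of x] p by (simp add: lower_bound_def m_def powr_powr)
qed

text \<open>Both bounds on one time slice, from the slice of the energy estimate of Lemma 3.3;
  the kinetic term W is nonnegative and discarded, as is every other term not needed.\<close>
lemma slice_bounds:
  fixes r r' W :: "real \<Rightarrow> real"
  assumes \<gamma>: "\<gamma> > 1" and \<alpha>: "\<alpha> > 1/2" and \<theta>: "\<theta> < 1/2" and \<rho>b: "\<rho>b > 0" and \<epsilon>: "\<epsilon> > 0"
    and pos: "\<And>y. r y > 0" and d: "\<And>y. (r has_real_derivative r' y) (at y)"
    and c: "continuous_on UNIV r'" and W: "\<And>y. W y \<ge> 0"
    and energy: "(\<integral>\<^sup>+y. ennreal (W y + (deriv (\<lambda>y. r y powr (\<alpha> - 1/2) / (\<alpha> - 1/2)) y)\<^sup>2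
         + \<epsilon>\<^sup>2 * (deriv (\<lambda>y. r y powr (\<theta> - 1/2) / (\<theta> - 1/2)) y)\<^sup>2
         + r y * Psi \<gamma> (r y) \<rho>b) \<partial>lborel) \<le> ennreal C0"
      (is "(\<integral>\<^sup>+y. ennreal (?E y) \<partial>lborel) \<le> _")
  shows "lower_bound \<gamma> (\<theta> - 1/2) \<rho>b (max C0 0) \<epsilon> \<le> r x
       \<and> r x \<le> upper_bound \<gamma> (\<alpha> - 1/2) \<rho>b (max C0 0)"
proof -
  have pot_nonneg: "0 \<le> r y * Psi \<gamma> (r y) \<rho>b" for y
    using Psi_nonneg[of "r y" \<rho>b \<gamma>] pos[of y] \<rho>b \<gamma> by simp
  have part: "(\<integral>\<^sup>+y. ennreal (g y) \<partial>lborel) \<le> ennreal (max C0 0)" if "\<And>y. g y \<le> ?E y" for g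
  proof -
    have "(\<integral>\<^sup>+y. ennreal (g y) \<partial>lborel) \<le> (\<integral>\<^sup>+y. ennreal (?E y) \<partial>lborel)"
      by (rule nn_integral_mono) (use that in \<open>simp add: ennreal_leI\<close>)
    also have "\<dots> \<le> ennreal (max C0 0)" using energy by (simp add: ennreal_max_0[of C0, simplified max.commute])
    finally show ?thesis .
  qed
  have "lower_bound \<gamma> (\<theta> - 1/2) \<rho>b (max C0 0) \<epsilon> \<le> r x"
    by (rule slice_lower_bound[OF \<gamma> _ \<rho>b \<epsilon> _ pos d c]) (use \<theta> W pot_nonneg in \<open>auto intro!: part\<close>)
  moreover have "r x \<le> upper_bound \<gamma> (\<alpha> - 1/2) \<rho>b (max C0 0)"
    by (rule slice_upper_bound[OF \<gamma> _ \<rho>b _ pos d c]) (use \<alpha> W pot_nonneg in \<open>auto intro!: part\<close>)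
  ultimately show ?thesis ..
qed

theorem lemma3p4:
  fixes \<gamma> \<alpha> \<theta> \<rho>b C0 :: real
  assumes "\<gamma> > 1" and "\<alpha> > 1/2" and "0 < \<theta>" and "\<theta> < 1/2" and "\<rho>b > 0"
  shows "\<exists>C. \<forall>\<epsilon> T \<rho> u. \<epsilon> > 0 \<and> T > 0
            \<and> smooth_on (UNIV \<times> {0..T}) \<rho> \<and> smooth_on (UNIV \<times> {0..T}) u
            \<and> (\<forall>x. \<forall>t\<in>{0..T}. \<rho> x t > 0)
            \<and> solves_system \<gamma> \<alpha> \<theta> \<epsilon> T \<rho> u
            \<and> lemma33_estimate \<gamma> \<alpha> \<theta> \<rho>b C0 \<epsilon> T \<rho> u
          \<longrightarrow> (\<exists>c>0. \<forall>x. \<forall>t\<in>{0..T}. c \<le> \<rho> x t \<and> \<rho> x t \<le> C)"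
proof (rule exI[of _ "upper_bound \<gamma> (\<alpha> - 1/2) \<rho>b (max C0 0)"], intro allI impI)
  fix \<epsilon> T \<rho> u
  assume "\<epsilon> > 0 \<and> T > 0 \<and> smooth_on (UNIV \<times> {0..T}) \<rho> \<and> smooth_on (UNIV \<times> {0..T}) u
    \<and> (\<forall>x. \<forall>t\<in>{0..T}. \<rho> x t > 0) \<and> solves_system \<gamma> \<alpha> \<theta> \<epsilon> T \<rho> u
    \<and> lemma33_estimate \<gamma> \<alpha> \<theta> \<rho>b C0 \<epsilon> T \<rho> u"
  then have \<epsilon>: "\<epsilon> > 0" and sm: "smooth_on (UNIV \<times> {0..T}) \<rho>"
    and pos: "\<forall>x. \<forall>t\<in>{0..T}. \<rho> x t > 0" and est: "lemma33_estimate \<gamma> \<alpha> \<theta> \<rho>b C0 \<epsilon> T \<rho> u"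
    by auto
  show "\<exists>c>0. \<forall>x. \<forall>t\<in>{0..T}. c \<le> \<rho> x t \<and> \<rho> x t \<le> upper_bound \<gamma> (\<alpha> - 1/2) \<rho>b (max C0 0)"
  proof (intro exI[of _ "lower_bound \<gamma> (\<theta> - 1/2) \<rho>b (max C0 0) \<epsilon>"] conjI allI ballI)
    show "lower_bound \<gamma> (\<theta> - 1/2) \<rho>b (max C0 0) \<epsilon> > 0"
      using assms \<epsilon> by (intro lower_bound_pos) auto
    fix x t assume t: "t \<in> {0..T}"
    obtain r' where d: "\<forall>y. ((\<lambda>y. \<rho> y t) has_real_derivative r' y) (at y)"
      and c: "continuous_on UNIV r'"
      using smooth_slice_C1[OF sm t] by blast
    have "lower_bound \<gamma> (\<theta> - 1/2) \<rho>b (max C0 0) \<epsilon> \<le> \<rho> x t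
        \<and> \<rho> x t \<le> upper_bound \<gamma> (\<alpha> - 1/2) \<rho>b (max C0 0)"
      by (rule slice_bounds[where W = "\<lambda>y. \<rho> y t * (u y t)\<^sup>2"])
        (use assms \<epsilon> pos t d c est in \<open>auto simp: lemma33_estimate_def dx_def less_imp_le\<close>)
    then show "lower_bound \<gamma> (\<theta> - 1/2) \<rho>b (max C0 0) \<epsilon> \<le> \<rho> x t"
      and "\<rho> x t \<le> upper_bound \<gamma> (\<alpha> - 1/2) \<rho>b (max C0 0)" by auto
  qed
qed

end
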